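(* For every odd prime $p$ there exist infinitely many real quadratic fields $K = \mathbb{Q}(\sqrt M)$ whose fundamental unit $\varepsilon_M$ is a $p$-th power in $K_{\mathfrak p}$ for every prime $\mathfrak p \mid p$ of $K$ (equivalently, the normalized $p$-adic regulator of $K$ is divisible by $p$); in particular there exist infinitely many real quadratic fields that are not $p$-rational.
   Context: $\varepsilon_M>1$ is the fundamental unit of $K$. For a number field $K$ and prime $p$, let $\mathfrak T_K$ be the torsion subgroup of the Galois group over $K$ of the maximal abelian pro-$p$-extension of $K$ unramified outside $p$ and $\infty$. $K$ is called $p$-rational if it satisfies the Leopoldt conjecture at $p$ (automatic for real quadratic fields) and $\mathfrak T_K$ is trivial. *)

theory Defs
  imports Complex_Main "HOL-Computational_Algebra.Computational_Algebra" "HOL-Algebra.Ideal_Product"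
begin

definition qfield :: "int \<Rightarrow> real set" where
  "qfield M = {of_rat a + of_rat b * sqrt (of_int M) | a b. True}"

definition ring_of_integers :: "int \<Rightarrow> real set" where
  "ring_of_integers M = {x \<in> qfield M. algebraic_int x}"

definition OK_ring :: "int \<Rightarrow> real ring" where
  "OK_ring M = \<lparr>carrier = ring_of_integers M, monoid.mult = (*), one = 1,
                 zero = 0, add = (+)\<rparr>"

definition is_fundamental_unit :: "int \<Rightarrow> real \<Rightarrow> bool" where
  "is_fundamental_unit M e \<longleftrightarrow>
     e \<in> ring_of_integers M \<and> inverse e \<in> ring_of_integers M \<and> e > 1 \<and>
     (\<forall>u. u \<in> ring_of_integers M \<and> inverse u \<in> ring_of_integers M \<and> u > 1 \<longrightarrow> e \<le> u)"

fun ideal_power :: "int \<Rightarrow> real set \<Rightarrow> nat \<Rightarrow> real set" where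
  "ideal_power M P 0 = ring_of_integers M"
| "ideal_power M P (Suc n) = ideal_prod (OK_ring M) P (ideal_power M P n)"

definition primes_above :: "int \<Rightarrow> nat \<Rightarrow> real set set" where
  "primes_above M p = {P. primeideal P (OK_ring M) \<and> real p \<in> P}"

text \<open>u (in O_K) is a p-th power in the completion K_P: u is a P-adic limit of
  p-th powers of elements of O_K, i.e. for every n there is x in O_K with
  u - x^p in P^n (O_K is dense in the P-adic completion, which is complete, and
  the p-th power map on the compact ring O_P is closed).\<close>
definition pth_power_in_completion :: "int \<Rightarrow> nat \<Rightarrow> real set \<Rightarrow> real \<Rightarrow> bool" where
  "pth_power_in_completion M p P u \<longleftrightarrow>
     (\<forall>n. \<exists>x \<in> ring_of_integers M. u - x ^ p \<in> ideal_power M P n)"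

end

theory Submission
  imports Defs "HOL-Library.Infinite_Set"
begin

(* Let d be such that d and p^4 d + 1 are squarefree (a sieve over d = 1 mod 4 shows that such d
   are unbounded) and put M = d (p^4 d + 1) = (d p^2)^2 + d.  This is a field of Richaud-Degert
   type, whose fundamental unit is eps = 2 d p^4 + 1 + 2 p^2 sqrt M: it has norm 1, and it is
   minimal because x^2 - M y^2 = +-4 has no solution with 0 < y < 4 p^2.  Since eps = 1 mod p^2
   and p is odd, Newton's iteration for x^p = eps converges p-adically, so eps is a p-th power
   in the completion at every prime above p. *)

section \<open>Integer and rational polynomials\<close>

lemma map_poly_of_int_add:
  "map_poly (of_int :: int \<Rightarrow> 'a::comm_ring_1) (p + q) = map_poly of_int p + map_poly of_int q"
  by (rule poly_eqI) (simp add: coeff_map_poly)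

lemma map_poly_of_int_mult:
  "map_poly (of_int :: int \<Rightarrow> 'a::comm_ring_1) (p * q) = map_poly of_int p * map_poly of_int q"
  by (rule poly_eqI) (simp add: coeff_mult coeff_map_poly of_int_sum)

lemma map_poly_of_int_power:
  "map_poly (of_int :: int \<Rightarrow> 'a::comm_ring_1) (p ^ n) = map_poly of_int p ^ n"
  by (induction n) (simp_all add: map_poly_of_int_mult)

lemma map_poly_of_int_eq_iff [simp]:
  "map_poly (of_int :: int \<Rightarrow> 'a::ring_char_0) p = map_poly of_int q \<longleftrightarrow> p = q"
  by (auto simp: poly_eq_iff coeff_map_poly)

lemma map_poly_of_rat_add:
  "map_poly (of_rat :: rat \<Rightarrow> 'a::field_char_0) (p + q) = map_poly of_rat p + map_poly of_rat q"
  by (rule poly_eqI) (simp add: coeff_map_poly of_rat_add)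

lemma map_poly_of_rat_mult:
  "map_poly (of_rat :: rat \<Rightarrow> 'a::field_char_0) (p * q) = map_poly of_rat p * map_poly of_rat q"
  by (rule poly_eqI) (simp add: coeff_mult coeff_map_poly of_rat_sum of_rat_mult)

lemma rat_poly_clear_denominators:
  fixes f :: "rat poly"
  obtains E :: int and F where "E > 0" "smult (of_int E) f = map_poly of_int F"
proof -
  have "\<exists>E F. E > (0::int) \<and> smult (of_int E) f = map_poly of_int F"
  proof (induction f rule: pCons_induct)
    case 0
    show ?case by (rule exI[of _ 1], rule exI[of _ 0]) simp
  next
    case (pCons c f)
    then obtain E F where EF: "E > 0" "smult (of_int E) f = map_poly of_int F" by blast
    obtain n m where c: "quotient_of c = (n, m)" by (cases "quotient_of c")
    have "m > 0" using quotient_of_denom_pos[OF c] .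
    moreover have "smult (of_int (m * E)) (pCons c f) = map_poly of_int (pCons (n * E) (smult m F))"
      using EF(2)[symmetric] \<open>m > 0\<close> quotient_of_div[OF c] by (simp add: map_poly_pCons map_poly_smult)
    ultimately show ?case using EF(1) by (metis mult_pos_pos)
  qed
  thus ?thesis using that by blast
qed

lemma content_int_poly_nonneg: "content (q :: int poly) \<ge> 0"
  by (metis abs_ge_zero normalize_content normalize_int_def)

lemma content_monic:
  fixes q :: "int poly"
  assumes "lead_coeff q = 1"
  shows "content q = 1"
  using content_dvd_coeff[of q "degree q"] assms content_int_poly_nonneg[of q] by simp

lemma monic_factor_of_monic_int_poly:
  fixes q :: "int poly" and g h :: "rat poly"
  assumes q: "lead_coeff q = 1" and fac: "map_poly of_int q = g * h" and g: "lead_coeff g = 1"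
  shows "coeff g i \<in> \<int>"
proof -
  obtain D G where DG: "D > 0" "smult (of_int D) g = map_poly of_int G"
    by (rule rat_poly_clear_denominators)
  obtain E H where EH: "E > 0" "smult (of_int E) h = map_poly of_int H"
    by (rule rat_poly_clear_denominators)
  have "lead_coeff (map_poly (of_int :: int \<Rightarrow> rat) q) = 1"
    using q by (simp add: degree_map_poly coeff_map_poly)
  hence h: "lead_coeff h = 1"
    using fac g by (simp add: lead_coeff_mult)
  have "map_poly of_int (smult (D * E) q) = (map_poly of_int (G * H) :: rat poly)"
    using fac DG(2)[symmetric] EH(2)[symmetric]
    by (simp add: map_poly_smult map_poly_of_int_mult mult_smult_left mult_smult_right mult.commute)
  hence "G * H = smult (D * E) q"
    by simp
  hence "content G * content H = content (smult (D * E) q)"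
    by (metis content_mult)
  also have "\<dots> = D * E"
    using content_monic[OF q] DG(1) EH(1) by (simp add: content_smult)
  finally have "content G * content H = D * E" .
  moreover have "content G dvd D" "content H dvd E"
    using content_dvd_coeff[of G "degree g"] content_dvd_coeff[of H "degree h"]
      arg_cong[OF DG(2), of "\<lambda>r. coeff r (degree g)"] arg_cong[OF EH(2), of "\<lambda>r. coeff r (degree h)"]
      g h by (simp_all add: coeff_map_poly)
  ultimately have "content G = D"
    using DG(1) EH(1) content_int_poly_nonneg[of G]
    by (metis dvd_mult_cancel_left dvd_times_right_cancel_iff less_le_not_le zdvd_antisym_nonneg)
  then obtain k where "coeff G i = D * k"
    using content_dvd_coeff[of G i] by (metis dvdE)
  hence "of_int D * coeff g i = of_int (D * k)"
    using arg_cong[OF DG(2), of "\<lambda>r. coeff r i"] by (simp add: coeff_map_poly)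
  thus ?thesis
    using DG(1) by simp
qed

section \<open>Real quadratic fields\<close>

lemma Ints_if_squarefree_mult_square:
  fixes M :: int and b :: rat
  assumes sf: "squarefree M" and Mb: "of_int M * b^2 \<in> \<int>"
  shows "b \<in> \<int>"
proof -
  obtain P Q where PQ: "quotient_of b = (P, Q)"
    by (cases "quotient_of b")
  have Q: "Q > 0" "coprime P Q" "b = of_int P / of_int Q"
    using quotient_of_denom_pos[OF PQ] quotient_of_coprime[OF PQ] quotient_of_div[OF PQ] by auto
  obtain n where "of_int M * b^2 = of_int n"
    using Mb by (auto elim: Ints_cases)
  hence "of_int (M * P^2) = (of_int (n * Q^2) :: rat)"
    using Q by (simp add: field_simps)
  hence "Q^2 dvd M * P^2"
    by (metis dvd_triv_right of_int_eq_iff)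
  moreover have "coprime (Q^2) (P^2)"
    using Q(2) by (simp add: coprime_commute)
  ultimately have "Q^2 dvd M"
    using coprime_dvd_mult_left_iff by blast
  hence "Q = 1"
    using squarefreeD[OF sf] Q(1) by fastforce
  thus ?thesis
    using Q(3) by simp
qed

lemma sqrt_squarefree_notin_Rats:
  fixes M :: int
  assumes "M > 1" and sf: "squarefree M"
  shows "sqrt (of_int M) \<notin> \<rat>"
proof
  assume "sqrt (of_int M) \<in> \<rat>"
  moreover have "algebraic_int (sqrt (of_int M))"
    unfolding sqrt_def by (rule algebraic_int_nth_root_real) simp
  ultimately obtain k where k: "sqrt (of_int M) = of_int k"
    using rational_algebraic_int_is_int by (auto elim: Ints_cases)
  hence "(of_int (k^2) :: real) = sqrt (of_int M) ^ 2"
    by simp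
  also have "\<dots> = of_int M"
    using \<open>M > 1\<close> by simp
  finally have "M = k^2"
    by (simp only: of_int_eq_iff)
  moreover have "\<bar>k\<bar> = 1"
    using squarefreeD[OF sf, of k] \<open>M = k^2\<close> by simp
  ultimately show False
    using \<open>M > 1\<close> by (metis power2_abs one_power2 less_irrefl)
qed

lemma quadratic_coords_eq_0:
  fixes M :: int and a b :: rat
  assumes "M > 1" "squarefree M" and "of_rat a + of_rat b * sqrt (of_int M) = (0 :: real)"
  shows "a = 0 \<and> b = 0"
proof -
  have "b = 0"
  proof (rule ccontr)
    assume "b \<noteq> 0"
    hence "sqrt (of_int M) = of_rat (- a / b)"
      using assms(3) by (simp add: of_rat_divide of_rat_minus field_simps)
    thus False
      using sqrt_squarefree_notin_Rats[OF assms(1,2)] by (metis Rats_of_rat)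
  qed
  thus ?thesis
    using assms(3) by simp
qed

definition Z_sqrt :: "int \<Rightarrow> real set" where
  "Z_sqrt M = {of_int a + of_int b * sqrt (of_int M) | a b. True}"

lemma Z_sqrt_intro: "of_int a + of_int b * sqrt (of_int M) \<in> Z_sqrt M"
  unfolding Z_sqrt_def by blast

lemma Z_sqrt_of_int: "of_int k \<in> Z_sqrt M"
  using Z_sqrt_intro[of k 0] by simp

lemma Z_sqrt_add:
  assumes "x \<in> Z_sqrt M" "y \<in> Z_sqrt M"
  shows "x + y \<in> Z_sqrt M"
proof -
  obtain a b c d where "x = of_int a + of_int b * sqrt (of_int M)" "y = of_int c + of_int d * sqrt (of_int M)"
    using assms unfolding Z_sqrt_def by blast
  hence "x + y = of_int (a + c) + of_int (b + d) * sqrt (of_int M)"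
    by (simp add: algebra_simps)
  thus ?thesis
    unfolding Z_sqrt_def by blast
qed

text \<open>No sign condition on \<open>M\<close> is needed: \<open>sqrt x * sqrt x = \<bar>x\<bar>\<close> for all real \<open>x\<close>.\<close>
lemma Z_sqrt_mult:
  assumes "x \<in> Z_sqrt M" "y \<in> Z_sqrt M"
  shows "x * y \<in> Z_sqrt M"
proof -
  obtain a b c d where "x = of_int a + of_int b * sqrt (of_int M)" "y = of_int c + of_int d * sqrt (of_int M)"
    using assms unfolding Z_sqrt_def by blast
  hence "x * y = of_int (a * c + b * d * \<bar>M\<bar>) + of_int (a * d + b * c) * sqrt (of_int M)"
    by (simp add: algebra_simps)
  thus ?thesis
    unfolding Z_sqrt_def by blast
qed

lemma Z_sqrt_poly_of_int:
  assumes "t \<in> Z_sqrt M"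
  shows "poly (map_poly of_int F) t \<in> Z_sqrt M"
proof (induction F)
  case 0
  show ?case
    using Z_sqrt_of_int[of 0 M] by simp
next
  case (pCons c F)
  thus ?case
    using assms by (simp add: map_poly_pCons Z_sqrt_add Z_sqrt_mult Z_sqrt_of_int)
qed

lemma Z_sqrt_subset_ring_of_integers: "Z_sqrt M \<subseteq> ring_of_integers M"
proof
  fix x assume "x \<in> Z_sqrt M"
  then obtain a b where x: "x = of_int a + of_int b * sqrt (of_int M)"
    unfolding Z_sqrt_def by blast
  let ?q = "[:of_int (a^2 - \<bar>M\<bar> * b^2), of_int (-2*a), 1:] :: real poly"
  have "algebraic_int x"
  proof (rule algebraic_int.intros[of ?q])
    show "\<forall>i. coeff ?q i \<in> \<int>"
      by (auto simp: coeff_pCons split: nat.split)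
    show "poly ?q x = 0"
      unfolding x by (simp add: algebra_simps power2_eq_square)
  qed simp
  moreover have "x \<in> qfield M"
    unfolding qfield_def x by (rule CollectI, rule exI[of _ "of_int a"], rule exI[of _ "of_int b"]) simp
  ultimately show "x \<in> ring_of_integers M"
    unfolding ring_of_integers_def by blast
qed

lemma quadratic_min_poly_dvd:
  fixes M :: int and a b :: rat and Q :: "rat poly"
  assumes M: "M > 1" "squarefree M" and "b \<noteq> 0"
    and Q: "poly (map_poly of_rat Q) (of_rat a + of_rat b * sqrt (of_int M)) = (0 :: real)"
  shows "[:a^2 - of_int M * b^2, -2*a, 1:] dvd Q"
proof -
  define u :: real where "u = of_rat a + of_rat b * sqrt (of_int M)"
  define g where "g = [:a^2 - of_int M * b^2, -2*a, 1:]"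
  define r where "r = Q mod g"
  have "poly (map_poly of_rat g) u = (of_rat b)^2 * (sqrt (of_int M) * sqrt (of_int M) - of_int M)"
    unfolding g_def u_def
    by (simp add: map_poly_pCons of_rat_diff of_rat_minus of_rat_mult of_rat_power algebra_simps power2_eq_square)
  hence "poly (map_poly of_rat g) u = 0"
    using M by simp
  moreover have "Q = g * (Q div g) + r"
    unfolding r_def by simp
  ultimately have r_root: "poly (map_poly of_rat r) u = 0"
    using Q unfolding u_def
    by (metis add_0 map_poly_of_rat_add map_poly_of_rat_mult mult_zero_left poly_add poly_mult)
  have "degree r \<le> 1"
    using degree_mod_less'[of g Q] unfolding r_def g_def by fastforce
  hence r: "r = [:coeff r 0, coeff r 1:]"
    by (intro poly_eqI) (auto simp: coeff_pCons coeff_eq_0 split: nat.split)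
  have coords: "of_rat (coeff r 0 + coeff r 1 * a) + of_rat (coeff r 1 * b) * sqrt (of_int M) = (0 :: real)"
    using r_root by (subst (asm) r) (simp add: u_def map_poly_pCons of_rat_add of_rat_mult algebra_simps)
  have "coeff r 0 = 0" "coeff r 1 = 0"
    using quadratic_coords_eq_0[OF M coords] \<open>b \<noteq> 0\<close> by auto
  hence "r = 0"
    using r by simp
  thus ?thesis
    unfolding r_def g_def by (simp add: mod_eq_0_iff_dvd)
qed

lemma algebraic_int_quadratic_coords:
  fixes M :: int and a b :: rat
  assumes M: "M > 1" "squarefree M" and "b \<noteq> 0"
    and "algebraic_int (of_rat a + of_rat b * sqrt (of_int M) :: real)"
  shows "2 * a \<in> \<int>" and "a^2 - of_int M * b^2 \<in> \<int>"
proof -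
  obtain q where q: "poly (map_poly of_int q) (of_rat a + of_rat b * sqrt (of_int M)) = (0 :: real)"
    "lead_coeff q = 1"
    using assms(4) unfolding algebraic_int_altdef_ipoly by blast
  define g where "g = [:a^2 - of_int M * b^2, -2*a, 1:]"
  have "map_poly (of_rat :: rat \<Rightarrow> real) (map_poly of_int q) = map_poly of_int q"
    by (simp add: map_poly_map_poly o_def)
  hence "g dvd map_poly of_int q"
    using quadratic_min_poly_dvd[OF M \<open>b \<noteq> 0\<close>] q(1) unfolding g_def by metis
  then obtain h where "map_poly of_int q = g * h"
    by (elim dvdE)
  hence "coeff g i \<in> \<int>" for i
    using monic_factor_of_monic_int_poly[OF q(2)] by (simp add: g_def)
  from this[of 0] this[of 1] show "2 * a \<in> \<int>" "a^2 - of_int M * b^2 \<in> \<int>"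
    by (simp_all add: g_def)
qed

lemma ring_of_integers_half_coords:
  fixes M :: int
  assumes M: "M > 1" "squarefree M" and u: "u \<in> ring_of_integers M"
  obtains X Y :: int where "2 * u = of_int X + of_int Y * sqrt (of_int M)" and "4 dvd X^2 - M * Y^2"
proof -
  obtain a b where ab: "u = of_rat a + of_rat b * sqrt (of_int M)"
    using u unfolding ring_of_integers_def qfield_def by blast
  have alg: "algebraic_int u"
    using u unfolding ring_of_integers_def by blast
  show ?thesis
  proof (cases "b = 0")
    case True
    hence "u \<in> \<int>"
      using ab alg by (auto intro: rational_algebraic_int_is_int)
    then obtain k where "u = of_int k"
      by (elim Ints_cases)
    thus ?thesis
      by (intro that[of "2 * k" 0]) (simp_all add: power2_eq_square)
  next
    case False
    obtain X where X: "2 * a = of_int X"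
      using algebraic_int_quadratic_coords(1)[OF M False] alg ab by (auto elim: Ints_cases)
    obtain N where N: "a^2 - of_int M * b^2 = of_int N"
      using algebraic_int_quadratic_coords(2)[OF M False] alg ab by (auto elim: Ints_cases)
    have "of_int M * (2 * b)^2 = (2 * a)^2 - 4 * (a^2 - of_int M * b^2)"
      by (simp add: algebra_simps power2_eq_square)
    hence "of_int M * (2 * b)^2 \<in> \<int>"
      using X N by simp
    hence "2 * b \<in> \<int>"
      by (rule Ints_if_squarefree_mult_square[OF M(2)])
    then obtain Y where Y: "2 * b = of_int Y"
      by (elim Ints_cases)
    have "(of_int (X^2 - M * Y^2) :: rat) = (2 * a)^2 - of_int M * (2 * b)^2"
      by (simp add: X Y)
    also have "\<dots> = of_int (4 * N)"
      by (simp add: algebra_simps power2_eq_square flip: N)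
    finally have "X^2 - M * Y^2 = 4 * N"
      by (simp only: of_int_eq_iff)
    moreover have "2 * u = of_rat (2 * a) + of_rat (2 * b) * sqrt (of_int M)"
      using ab by (simp add: of_rat_mult algebra_simps)
    ultimately show ?thesis
      using X Y by (intro that[of X Y]) simp_all
  qed
qed

lemma Brahmagupta_identity:
  fixes X Y X' Y' M :: "'a :: comm_ring_1"
  shows "(X^2 - M * Y^2) * (X'^2 - M * Y'^2) = (X * X' + M * Y * Y')^2 - M * (X * Y' + X' * Y)^2"
  by (simp add: power2_eq_square algebra_simps)

text \<open>The product relation gives \<open>X X' + M Y Y' = 4\<close> and \<open>X Y' + X' Y = 0\<close>, so by
  Brahmagupta's identity the two norm forms multiply to \<open>16\<close>.\<close>
lemma norm_form_of_unit:
  fixes M X Y X' Y' :: int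
  assumes M: "M > 1" "squarefree M"
    and prod: "(of_int X + of_int Y * sqrt (of_int M)) * (of_int X' + of_int Y' * sqrt (of_int M)) = (4 :: real)"
    and "4 dvd X^2 - M * Y^2" "4 dvd X'^2 - M * Y'^2"
  shows "\<bar>X^2 - M * Y^2\<bar> = 4"
proof -
  define s where "s = sqrt (of_int M)"
  have s: "s * s = of_int M"
    using M unfolding s_def by simp
  have "(of_int X + of_int Y * s) * (of_int X' + of_int Y' * s)
      = of_int (X * X' + M * Y * Y') + of_int (X * Y' + X' * Y) * s"
    by (simp add: algebra_simps flip: s)
  with prod have coords: "of_rat (of_int (X * X' + M * Y * Y' - 4))
      + of_rat (of_int (X * Y' + X' * Y)) * sqrt (of_int M) = (0 :: real)"
    unfolding s_def by (simp only: of_rat_of_int_eq)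
  from quadratic_coords_eq_0[OF M coords] have "X * X' + M * Y * Y' = 4" "X * Y' + X' * Y = 0"
    by (simp_all only: of_int_eq_0_iff) linarith+
  hence "(X^2 - M * Y^2) * (X'^2 - M * Y'^2) = 16"
    using Brahmagupta_identity[of X M Y X' Y'] by simp
  moreover obtain N N' where N: "X^2 - M * Y^2 = 4 * N" "X'^2 - M * Y'^2 = 4 * N'"
    using assms(4,5) by (elim dvdE)
  ultimately have "N * N' = 1"
    by simp
  hence "\<bar>N\<bar> = 1"
    by (auto simp: zmult_eq_1_iff)
  thus ?thesis
    using N(1) by (simp add: abs_mult)
qed

text \<open>The conjugate \<open>v = (X - Y sqrt M) / 2\<close> satisfies \<open>\<bar>u v\<bar> = 1\<close>, so \<open>\<bar>v\<bar> < 1 < u\<close>, and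
  \<open>X = u + v\<close>, \<open>Y sqrt M = u - v\<close>.\<close>
lemma half_coords_pos:
  fixes M X Y :: int
  assumes "M > 0" and u: "u > 1" and XY: "2 * u = of_int X + of_int Y * sqrt (of_int M)"
    and norm: "\<bar>X^2 - M * Y^2\<bar> = 4"
  shows "X > 0" and "Y > 0"
proof -
  define s where "s = sqrt (of_int M)"
  have s: "s * s = of_int M" "s > 0"
    using \<open>M > 0\<close> unfolding s_def by simp_all
  define v where "v = (of_int X - of_int Y * s) / 2"
  have u_eq: "u = (of_int X + of_int Y * s) / 2"
    using XY unfolding s_def by simp
  have "u * v = (of_int X ^ 2 - of_int Y ^ 2 * (s * s)) / 4"
    unfolding u_eq v_def by (simp add: algebra_simps power2_eq_square)
  also have "\<dots> = of_int (X^2 - M * Y^2) / 4"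
    using s(1) by simp
  finally have "\<bar>u * v\<bar> = \<bar>of_int (X^2 - M * Y^2)\<bar> / 4"
    by (simp only: abs_divide abs_numeral)
  also have "\<dots> = 1"
    using norm by (metis of_int_abs of_int_numeral div_self zero_neq_numeral)
  finally have "\<bar>v\<bar> = 1 / u"
    using u by (simp add: abs_mult field_simps)
  hence "\<bar>v\<bar> < 1"
    using u by simp
  moreover have "of_int X = u + v" "of_int Y * s = u - v"
    unfolding u_eq v_def by (simp_all add: field_simps)
  ultimately have "of_int X > (0 :: real)" "of_int Y * s > 0"
    using u by auto
  thus "X > 0" "Y > 0"
    using s(2) by (simp_all add: zero_less_mult_iff)
qed

lemma unit_half_coords:
  fixes M :: int
  assumes M: "M > 1" "squarefree M"
    and u: "u \<in> ring_of_integers M" "inverse u \<in> ring_of_integers M" "u > 1"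
  obtains X Y :: int where "2 * u = of_int X + of_int Y * sqrt (of_int M)"
    and "\<bar>X^2 - M * Y^2\<bar> = 4" and "X > 0" and "Y > 0"
proof -
  obtain X Y where XY: "2 * u = of_int X + of_int Y * sqrt (of_int M)" "4 dvd X^2 - M * Y^2"
    using ring_of_integers_half_coords[OF M u(1)] by blast
  obtain X' Y' where XY': "2 * inverse u = of_int X' + of_int Y' * sqrt (of_int M)" "4 dvd X'^2 - M * Y'^2"
    using ring_of_integers_half_coords[OF M u(2)] by blast
  have "(of_int X + of_int Y * sqrt (of_int M)) * (of_int X' + of_int Y' * sqrt (of_int M)) = (4 :: real)"
    using u(3) by (simp flip: XY(1) XY'(1))
  hence "\<bar>X^2 - M * Y^2\<bar> = 4"
    using norm_form_of_unit[OF M _ XY(2) XY'(2)] by blast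
  with XY(1) half_coords_pos[of M u X Y] M(1) u(3) show ?thesis
    using that by simp
qed

section \<open>Fundamental units of Richaud--Degert type\<close>

text \<open>With \<open>z = d P Y\<close> one has \<open>X^2 = z^2 + d Y^2 \<plusminus> 4\<close>, and \<open>4 < d Y^2 < 4 z\<close> for
  \<open>Y < 4 P\<close> forces \<open>X = z + 1\<close>; then \<open>d\<close> divides \<open>3\<close> or \<open>5\<close>.\<close>
lemma Richaud_Degert_norm_pm4_lower_bound:
  fixes d P X Y :: int
  assumes d: "d > 5" and P: "P \<ge> 1" and X: "X > 0" and Y: "Y > 0"
    and norm: "\<bar>X^2 - (d^2 * P^2 + d) * Y^2\<bar> = 4"
  shows "Y \<ge> 4 * P"
proof (rule ccontr)
  assume "\<not> Y \<ge> 4 * P"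
  define z where "z = d * P * Y"
  have "z > 0"
    unfolding z_def using d P Y by simp
  have "(d^2 * P^2 + d) * Y^2 = z^2 + d * Y^2"
    unfolding z_def by (simp add: power_mult_distrib algebra_simps)
  hence X2: "X^2 = z^2 + d * Y^2 + 4 \<or> X^2 = z^2 + d * Y^2 - 4"
    using norm by arith
  have "1 \<le> Y^2"
    using Y by (simp add: one_le_power)
  hence "d * 1 \<le> d * Y^2"
    using d by (intro mult_left_mono) simp_all
  hence "d * Y^2 > 4"
    using d by linarith
  have "4 * z - d * Y^2 = d * Y * (4 * P - Y)"
    unfolding z_def by (simp add: algebra_simps power2_eq_square)
  moreover have "d * Y * (4 * P - Y) > 0"
    using d Y \<open>\<not> Y \<ge> 4 * P\<close> by simp
  ultimately have "d * Y^2 < 4 * z"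
    by linarith
  have "(z + 2)^2 = z^2 + 4 * z + 4"
    by (simp add: power2_eq_square algebra_simps)
  hence "z^2 < X^2" "X^2 < (z + 2)^2"
    using X2 \<open>d * Y^2 > 4\<close> \<open>d * Y^2 < 4 * z\<close> by auto
  hence "z < X" "X < z + 2"
    using X \<open>z > 0\<close> power_less_imp_less_base[of z 2 X] power_less_imp_less_base[of X 2 "z + 2"] by simp_all
  hence "X = z + 1"
    by simp
  hence "X^2 = z^2 + 2 * z + 1"
    by (simp add: power2_eq_square algebra_simps)
  moreover have "d * (Y^2 - 2 * P * Y) = d * Y^2 - 2 * z"
    unfolding z_def by (simp add: algebra_simps power2_eq_square)
  ultimately have "d * (Y^2 - 2 * P * Y) = -3 \<or> d * (Y^2 - 2 * P * Y) = 5"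
    using X2 by linarith
  hence "d dvd 3 \<or> d dvd 5"
    by (metis dvd_minus_iff dvd_triv_left)
  thus False
    using d zdvd_imp_le[of d 3] zdvd_imp_le[of d 5] by linarith
qed

lemma Richaud_Degert_unit_minimal:
  fixes d P M :: int
  assumes d: "d > 5" and P: "P \<ge> 1" and M: "M = d^2 * P^2 + d" "squarefree M"
    and u: "u \<in> ring_of_integers M" "inverse u \<in> ring_of_integers M" "u > 1"
  shows "of_int (2 * d * P^2 + 1) + of_int (2 * P) * sqrt (of_int M) \<le> u"
proof -
  have "d^2 * P^2 \<ge> 0"
    by simp
  hence "M > 1"
    using M(1) d by linarith
  obtain X Y where XY: "2 * u = of_int X + of_int Y * sqrt (of_int M)" "\<bar>X^2 - M * Y^2\<bar> = 4" "X > 0" "Y > 0"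
    using unit_half_coords[OF \<open>M > 1\<close> M(2) u] by blast
  have "Y \<ge> 4 * P"
    using Richaud_Degert_norm_pm4_lower_bound[OF d P XY(3,4)] XY(2) M(1) by simp
  define X\<^sub>0 where "X\<^sub>0 = 4 * d * P^2 + 2"
  have "X\<^sub>0^2 - 4 = M * (4 * P)^2"
    unfolding X\<^sub>0_def M(1) by (simp add: algebra_simps power2_eq_square)
  also have "\<dots> \<le> M * Y^2"
    using \<open>Y \<ge> 4 * P\<close> \<open>M > 1\<close> P by (intro mult_left_mono power_mono) simp_all
  also have "\<dots> \<le> X^2 + 4"
    using XY(2) by simp
  finally have "X\<^sub>0^2 - 8 \<le> X^2"
    by simp
  moreover have "d \<le> d * P^2"
    using d P by (simp add: one_le_power)
  hence "X\<^sub>0 \<ge> 5"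
    unfolding X\<^sub>0_def using d by (simp only: mult.assoc)
  moreover have "(X\<^sub>0 - 1)^2 = X\<^sub>0^2 - 2 * X\<^sub>0 + 1"
    by (simp add: power2_eq_square algebra_simps)
  ultimately have "(X\<^sub>0 - 1)^2 < X^2"
    by linarith
  hence "X\<^sub>0 - 1 < X"
    by (rule power_less_imp_less_base) (use XY(3) in simp)
  have "2 * (of_int (2 * d * P^2 + 1) + of_int (2 * P) * sqrt (of_int M)) =
      of_int X\<^sub>0 + of_int (4 * P) * sqrt (of_int M)"
    unfolding X\<^sub>0_def by (simp add: algebra_simps)
  also have "\<dots> \<le> of_int X + of_int Y * sqrt (of_int M)"
    using \<open>X\<^sub>0 - 1 < X\<close> \<open>Y \<ge> 4 * P\<close> \<open>M > 1\<close> by (intro add_mono mult_right_mono) simp_all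
  finally show ?thesis
    using XY(1) by simp
qed

text \<open>\<open>M = n^2 + r\<close> with \<open>n = d P\<close> and \<open>r = d\<close> dividing \<open>n\<close> is of Richaud--Degert type;
  the unit is \<open>(2 n^2 + r + 2 n sqrt M) / r\<close>, of norm \<open>1\<close>.\<close>
lemma fundamental_unit_Richaud_Degert:
  fixes d P M :: int
  assumes d: "d > 5" and P: "P \<ge> 1" and M: "M = d^2 * P^2 + d" "squarefree M"
  shows "is_fundamental_unit M (of_int (2 * d * P^2 + 1) + of_int (2 * P) * sqrt (of_int M))"
    (is "is_fundamental_unit M ?\<eta>")
proof -
  define \<eta>' where "\<eta>' = of_int (2 * d * P^2 + 1) + of_int (- 2 * P) * sqrt (of_int M)"
  have "d^2 * P^2 \<ge> 0"
    by simp
  hence "M > 1"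
    using M(1) d by linarith
  have "?\<eta> * \<eta>' = of_int ((2 * d * P^2 + 1)^2 - 4 * P^2 * M)"
    unfolding \<eta>'_def using \<open>M > 1\<close> by (simp add: algebra_simps power2_eq_square)
  also have "(2 * d * P^2 + 1)^2 - 4 * P^2 * M = 1"
    unfolding M(1) by (simp add: algebra_simps power2_eq_square)
  finally have "inverse ?\<eta> = \<eta>'"
    by (simp add: inverse_unique)
  hence "?\<eta> \<in> Z_sqrt M" "inverse ?\<eta> \<in> Z_sqrt M"
    unfolding \<eta>'_def by (simp_all only: Z_sqrt_intro)
  moreover have "0 \<le> real_of_int d * real_of_int P ^ 2" "0 < real_of_int P * sqrt (of_int M)"
    using d P \<open>M > 1\<close> by simp_all
  hence "?\<eta> > 1"
    by simp
  ultimately show ?thesis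
    unfolding is_fundamental_unit_def
    using Z_sqrt_subset_ring_of_integers Richaud_Degert_unit_minimal[OF d P M] by blast
qed

section \<open>\<open>p\<close>-th roots by Newton iteration\<close>

lemma odd_prime_ge_3:
  fixes p :: nat
  assumes "prime p" "odd p"
  shows "p \<ge> 3"
  using prime_ge_2_nat[OF assms(1)] assms(2) by (cases "p = 2") auto

lemma prime_power_dvd_binomial_term:
  fixes p k j :: nat
  assumes p: "prime p" "odd p" and j: "2 \<le> j" "j \<le> p"
  shows "p ^ (k + 3) dvd (p choose j) * p ^ ((k + 1) * j)"
proof (cases "j = p")
  case True
  have "k + 3 \<le> (k + 1) * 3"
    by simp
  also have "\<dots> \<le> (k + 1) * j"
    using odd_prime_ge_3[OF p] True by (metis mult_le_mono2)
  finally have "p ^ (k + 3) dvd p ^ ((k + 1) * j)"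
    by (rule le_imp_power_dvd)
  thus ?thesis
    by (simp add: dvd_mult)
next
  case False
  have "k + 2 \<le> (k + 1) * 2"
    by simp
  also have "\<dots> \<le> (k + 1) * j"
    using j(1) by (rule mult_le_mono2)
  finally have "p ^ (k + 2) dvd p ^ ((k + 1) * j)"
    by (rule le_imp_power_dvd)
  moreover have "p dvd (p choose j)"
    using j p(1) False by (intro dvd_choose_prime) simp_all
  ultimately have "p * p ^ (k + 2) dvd (p choose j) * p ^ ((k + 1) * j)"
    by (simp only: mult_dvd_mono)
  thus ?thesis
    by (simp add: numeral_3_eq_3)
qed

lemma binomial_power_prime_cong:
  fixes t :: "'a :: comm_ring_1"
  assumes p: "prime p" "odd p"
  obtains w where "(1 + of_nat p ^ (k + 1) * t) ^ p = 1 + of_nat p ^ (k + 2) * t + of_nat p ^ (k + 3) * w"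
proof -
  define c where "c j = (p choose j) * p ^ ((k + 1) * j) div p ^ (k + 3)" for j
  have binomial_term:
    "of_nat (p choose j) * (of_nat p ^ (k + 1) * t) ^ j = of_nat p ^ (k + 3) * (of_nat (c j) * t ^ j)"
    if "j \<in> {2..p}" for j
  proof -
    have "(p choose j) * p ^ ((k + 1) * j) = p ^ (k + 3) * c j"
      using prime_power_dvd_binomial_term[OF p] that unfolding c_def by simp
    hence "of_nat (p choose j) * of_nat p ^ ((k + 1) * j) = (of_nat p ^ (k + 3) * of_nat (c j) :: 'a)"
      by (metis of_nat_mult of_nat_power)
    moreover have "(of_nat p ^ (k + 1) * t) ^ j = of_nat p ^ ((k + 1) * j) * t ^ j"
      by (simp only: power_mult_distrib power_mult)
    ultimately show ?thesis
      by (simp only: mult.assoc[symmetric])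
  qed
  have "{..p} = insert 0 (insert 1 {2..p})"
    using odd_prime_ge_3[OF p] by auto
  hence "(1 + of_nat p ^ (k + 1) * t) ^ p = 1 + of_nat p * (of_nat p ^ (k + 1) * t)
      + (\<Sum>j\<in>{2..p}. of_nat (p choose j) * (of_nat p ^ (k + 1) * t) ^ j)"
    using binomial_ring[of "of_nat p ^ (k + 1) * t" 1 p] by (simp add: add.commute)
  also have "(\<Sum>j\<in>{2..p}. of_nat (p choose j) * (of_nat p ^ (k + 1) * t) ^ j)
      = of_nat p ^ (k + 3) * (\<Sum>j\<in>{2..p}. of_nat (c j) * t ^ j)"
    unfolding sum_distrib_left by (rule sum.cong[OF refl binomial_term])
  finally show ?thesis
    by (intro that) (simp add: mult.assoc)
qed

text \<open>Newton's iteration for \<open>x^p = 1 + p^2 t\<close>: if \<open>x^p\<close> is correct modulo \<open>p^(n+2)\<close>, then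
  \<open>x (1 - p^(n+1) c)\<close> is correct modulo \<open>p^(n+3)\<close>.  The identity holds in any commutative
  ring, i.e. it is a statement about the polynomial ring in \<open>t\<close> over the integers.\<close>
lemma pth_root_approximation:
  fixes t :: "'a :: comm_ring_1"
  assumes p: "prime p" "odd p"
  shows "\<exists>x c. x ^ p = 1 + of_nat p ^ 2 * t + of_nat p ^ (n + 2) * c"
proof (induction n)
  case 0
  show ?case
    by (rule exI[of _ 1], rule exI[of _ "- t"]) (simp add: power2_eq_square)
next
  case (Suc n)
  define q :: 'a where "q = of_nat p"
  define e where "e = 1 + q ^ 2 * t"
  obtain x c where x: "x ^ p = e + q ^ (n + 2) * c"
    using Suc unfolding q_def e_def by blast
  obtain w where w: "(1 + q ^ (n + 1) * - c) ^ p = 1 + q ^ (n + 2) * - c + q ^ (n + 3) * w"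
    using binomial_power_prime_cong[OF p] unfolding q_def by blast
  define x' where "x' = x * (1 + q ^ (n + 1) * - c)"
  define c' where "c' = e * w - q * t * c - q ^ (n + 1) * c ^ 2 + q ^ (n + 2) * c * w"
  have "x' ^ p = (e + q ^ (n + 2) * c) * (1 + q ^ (n + 2) * - c + q ^ (n + 3) * w)"
    unfolding x'_def by (simp only: power_mult_distrib x w)
  also have "\<dots> = e + q ^ (Suc n + 2) * c'"
    unfolding c'_def e_def by (simp add: power_add power2_eq_square numeral_3_eq_3 algebra_simps)
  finally show ?case
    unfolding q_def e_def by blast
qed

lemma Z_sqrt_pth_root_approximation:
  fixes p :: nat
  assumes "prime p" "odd p" and t: "t \<in> Z_sqrt M"
  obtains x c where "x \<in> Z_sqrt M" "c \<in> Z_sqrt M" "1 + real p ^ 2 * t - x ^ p = real p ^ n * c"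
proof -
  obtain X C :: "int poly" where XC: "X ^ p = 1 + of_nat p ^ 2 * [:0, 1:] + of_nat p ^ (n + 2) * C"
    using pth_root_approximation[OF assms(1,2)] by blast
  define ev :: "int poly \<Rightarrow> real" where "ev F = poly (map_poly of_int F) t" for F
  have ev_add: "ev (F + G) = ev F + ev G" and ev_mult: "ev (F * G) = ev F * ev G"
    and ev_power: "ev (F ^ k) = ev F ^ k" for F G k
    by (simp_all add: ev_def map_poly_of_int_add map_poly_of_int_mult map_poly_of_int_power)
  have "ev (of_nat m) = of_nat m" "ev [:0, 1:] = t" "ev 1 = 1" for m
    by (simp_all add: ev_def of_nat_poly map_poly_pCons)
  hence "ev X ^ p = 1 + real p ^ 2 * t + real p ^ (n + 2) * ev C"
    using arg_cong[OF XC, of ev] by (simp only: ev_add ev_mult ev_power)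
  hence "1 + real p ^ 2 * t - ev X ^ p = real p ^ n * (of_int (- (int p ^ 2)) * ev C)"
    by (simp add: power_add power2_eq_square)
  moreover have "ev X \<in> Z_sqrt M" "ev C \<in> Z_sqrt M"
    unfolding ev_def using t by (simp_all add: Z_sqrt_poly_of_int)
  ultimately show ?thesis
    using that Z_sqrt_mult[OF Z_sqrt_of_int] by blast
qed

lemma mult_power_mem_ideal_power:
  assumes "a \<in> P" "c \<in> ring_of_integers M"
  shows "a ^ n * c \<in> ideal_power M P n"
proof (induction n)
  case 0
  thus ?case using assms(2) by simp
next
  case (Suc n)
  have "a \<otimes>\<^bsub>OK_ring M\<^esub> (a ^ n * c) \<in> ideal_power M P (Suc n)"
    using ideal_prod.prod[OF assms(1) Suc] by simp
  thus ?case
    by (simp add: OK_ring_def mult.assoc)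
qed

lemma pth_power_in_completion_if_cong_1:
  fixes p :: nat
  assumes "prime p" "odd p" and "t \<in> Z_sqrt M" and "real p \<in> P"
  shows "pth_power_in_completion M p P (1 + real p ^ 2 * t)"
  unfolding pth_power_in_completion_def
proof
  fix n
  obtain x c where "x \<in> Z_sqrt M" "c \<in> Z_sqrt M" "1 + real p ^ 2 * t - x ^ p = real p ^ n * c"
    using Z_sqrt_pth_root_approximation[OF assms(1-3)] .
  thus "\<exists>x \<in> ring_of_integers M. 1 + real p ^ 2 * t - x ^ p \<in> ideal_power M P n"
    using mult_power_mem_ideal_power[OF assms(4)] Z_sqrt_subset_ring_of_integers by (metis subsetD)
qed

section \<open>A squarefree sieve\<close>

lemma sum_inverse_odd_squares_le: "(\<Sum>j = 1..L. 1 / (2 * real j + 1)^2) \<le> 1 / 4"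
proof -
  define f :: "nat \<Rightarrow> real" where "f j = - 1 / (4 * real j)" for j
  have "(\<Sum>j = 1..L. 1 / (2 * real j + 1)^2) \<le> (\<Sum>j = 1..L. f (Suc j) - f j)"
  proof (rule sum_mono)
    fix j :: nat assume "j \<in> {1..L}"
    hence "0 < 4 * real j * (real j + 1)"
      by simp
    moreover have "4 * real j * (real j + 1) \<le> (2 * real j + 1)^2"
      by (simp add: power2_eq_square algebra_simps)
    ultimately have "1 / (2 * real j + 1)^2 \<le> 1 / (4 * real j * (real j + 1))"
      by (intro frac_le) simp_all
    also have "\<dots> = f (Suc j) - f j"
      using \<open>j \<in> {1..L}\<close> unfolding f_def by (simp add: field_simps)
    finally show "1 / (2 * real j + 1)^2 \<le> f (Suc j) - f j" .
  qed
  also have "\<dots> = f (Suc L) - f 1"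
    by (rule sum_Suc_diff) simp
  also have "\<dots> \<le> 1 / 4"
    unfolding f_def by simp
  finally show ?thesis .
qed

lemma card_dvd_affine_le:
  fixes m a b N :: nat
  assumes "m > 0" and coprime: "\<And>i. m dvd a * i + b \<Longrightarrow> coprime m a"
  shows "card {i. i < N \<and> m dvd a * i + b} \<le> N div m + 1"
proof -
  define S where "S = {i. i < N \<and> m dvd a * i + b}"
  have "inj_on (\<lambda>i. i div m) S"
  proof
    fix i j assume ij: "i \<in> S" "j \<in> S" "i div m = j div m"
    have "int m dvd int (a * i + b) - int (a * j + b)"
      using ij(1,2) unfolding S_def by (intro dvd_diff) (simp_all only: of_nat_dvd_iff mem_Collect_eq)
    hence "int m dvd int a * (int i - int j)"
      by (simp add: algebra_simps)
    moreover have "coprime m a"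
      using coprime ij(1) unfolding S_def by blast
    hence "coprime (int m) (int a)"
      by simp
    ultimately have "int m dvd int i - int j"
      by (simp add: coprime_dvd_mult_right_iff)
    hence "i mod m = j mod m"
      by (metis mod_eq_dvd_iff of_nat_eq_iff zmod_int)
    with ij(3) show "i = j"
      by (metis div_mult_mod_eq)
  qed
  moreover have "(\<lambda>i. i div m) ` S \<subseteq> {..N div m}"
    unfolding S_def by (auto intro: div_le_mono)
  ultimately have "card S \<le> card {..N div m}"
    by (intro card_inj_on_le) simp_all
  thus ?thesis
    unfolding S_def by simp
qed

lemma not_squarefree_odd_square_dvd:
  fixes n :: nat
  assumes "\<not> squarefree n" and "\<not> 4 dvd n" and "n > 0"
  obtains x where "odd x" "x > 1" "x^2 dvd n" "x^2 \<le> n"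
proof -
  obtain x where x: "x^2 dvd n" "\<not> x dvd 1"
    using assms(1) by (rule not_squarefreeE)
  have "odd x"
  proof
    assume "even x"
    hence "4 dvd x^2"
      by (auto simp: power2_eq_square)
    thus False
      using x(1) assms(2) dvd_trans by blast
  qed
  moreover have "x^2 \<le> n"
    using x(1) assms(3) by (rule dvd_imp_le)
  moreover have "x > 1"
    using x(2) \<open>odd x\<close> by (cases x) auto
  ultimately show ?thesis
    using x(1) that by blast
qed

lemma sum_odd_square_quotients_le:
  fixes N L :: nat
  shows "(\<Sum>x | odd x \<and> 1 < x \<and> x \<le> L. real (N div x^2 + 1)) \<le> real N / 4 + real L"
proof -
  have "{x. odd x \<and> 1 < x \<and> x \<le> L} \<subseteq> (\<lambda>j. 2 * j + 1) ` {1..L}"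
    by (auto elim!: oddE)
  hence "(\<Sum>x | odd x \<and> 1 < x \<and> x \<le> L. real (N div x^2 + 1))
      \<le> (\<Sum>x \<in> (\<lambda>j. 2 * j + 1) ` {1..L}. real (N div x^2 + 1))"
    by (intro sum_mono2) simp_all
  also have "\<dots> = (\<Sum>j = 1..L. real (N div (2 * j + 1)^2) + 1)"
    by (subst sum.reindex) (auto simp: inj_on_def add.commute)
  also have "\<dots> \<le> (\<Sum>j = 1..L. real N * (1 / (2 * real j + 1)^2) + 1)"
  proof (rule sum_mono)
    fix j :: nat
    have "real (N div (2 * j + 1)^2) \<le> real N / real ((2 * j + 1)^2)"
      by (rule of_nat_div_le_of_nat)
    thus "real (N div (2 * j + 1)^2) + 1 \<le> real N * (1 / (2 * real j + 1)^2) + 1"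
      by (simp add: add.commute)
  qed
  also have "\<dots> = real N * (\<Sum>j = 1..L. 1 / (2 * real j + 1)^2) + real L"
    by (simp add: sum.distrib sum_distrib_left)
  also have "\<dots> \<le> real N / 4 + real L"
    using mult_left_mono[OF sum_inverse_odd_squares_le[of L], of "real N"] by simp
  finally show ?thesis .
qed

lemma coprime_mult_add_one:
  fixes a b :: "'a :: algebraic_semidom"
  shows "coprime a (b * a + 1)"
proof (rule coprimeI)
  fix c assume "c dvd a" "c dvd b * a + 1"
  moreover have "c dvd b * a"
    using \<open>c dvd a\<close> by simp
  ultimately show "is_unit c"
    by (metis dvd_add_right_iff)
qed

text \<open>For \<open>d = 4 i + 1\<close> neither \<open>d\<close> nor \<open>A d + 1 = 4 A i + (A + 1)\<close> is divisible by \<open>4\<close>,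
  so a square factor can be taken odd.\<close>
lemma not_squarefree_pair_odd_square_dvd:
  fixes A N L i :: nat
  assumes A: "A mod 4 = 1" and L: "4 * A * N + 1 \<le> L^2" and "i < N"
    and "\<not> (squarefree (4 * i + 1) \<and> squarefree (A * (4 * i + 1) + 1))"
  obtains x where "odd x" "1 < x" "x \<le> L" "x^2 dvd 4 * i + 1 \<or> x^2 dvd 4 * A * i + (A + 1)"
proof -
  have "A \<ge> 1"
    using A by auto
  have "4 * A * i + (A + 1) \<le> 4 * A * (i + 1) + 1"
    by simp
  also have "\<dots> \<le> 4 * A * N + 1"
    using \<open>i < N\<close> by (intro add_mono mult_le_mono2) simp_all
  also have "\<dots> \<le> L^2"
    by (rule L)
  finally have small: "4 * A * i + (A + 1) \<le> L^2" .
  have "(A + 1) mod 4 = 2"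
    using A by presburger
  hence "\<not> 4 dvd 4 * A * i + (A + 1)"
    by (simp add: mult.assoc dvd_add_right_iff dvd_eq_mod_eq_0)
  moreover have "\<not> 4 dvd 4 * i + 1"
    by presburger
  moreover have "i \<le> A * i"
    using \<open>A \<ge> 1\<close> by simp
  hence "4 * i + 1 \<le> 4 * A * i + (A + 1)"
    by (simp only: mult.assoc)
  moreover have "A * (4 * i + 1) + 1 = 4 * A * i + (A + 1)"
    by (simp add: algebra_simps)
  ultimately obtain n where "n = 4 * i + 1 \<or> n = 4 * A * i + (A + 1)"
    "\<not> squarefree n" "\<not> 4 dvd n" "n \<le> L^2"
    using assms(4) small by (metis order.trans)
  moreover from this have "n > 0"
    by (intro gr0I) simp
  ultimately obtain x where "odd x" "1 < x" "x^2 dvd n" "x^2 \<le> L^2"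
    by (metis not_squarefree_odd_square_dvd order.trans)
  thus ?thesis
    using that \<open>n = 4 * i + 1 \<or> n = 4 * A * i + (A + 1)\<close> by (metis power2_nat_le_eq_le)
qed

text \<open>Each odd \<open>x\<close> excludes at most one residue class of \<open>i\<close> modulo \<open>x^2\<close> per polynomial.\<close>
lemma card_odd_square_classes_le:
  fixes A N x :: nat
  assumes "odd x"
  shows "card ({i. i < N \<and> x^2 dvd 4 * i + 1} \<union> {i. i < N \<and> x^2 dvd 4 * A * i + (A + 1)})
    \<le> 2 * (N div x^2 + 1)"
proof -
  have "coprime (x^2) (2^2)"
    using assms by (simp only: coprime_power_left_iff coprime_power_right_iff coprime_right_2_iff_odd) simp
  hence "coprime (x^2) 4"
    by simp
  have "coprime (x^2) (4 * A)" if "x^2 dvd 4 * A * i + (A + 1)" for i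
  proof -
    have "x^2 dvd (4 * i + 1) * A + 1"
      using that by (simp add: algebra_simps)
    hence "coprime A (x^2)"
      using coprime_divisors[OF dvd_refl _ coprime_mult_add_one] by blast
    thus ?thesis
      using \<open>coprime (x^2) 4\<close> by (simp add: coprime_commute)
  qed
  moreover have "x > 0"
    using assms by (rule odd_pos)
  ultimately have "card {i. i < N \<and> x^2 dvd 4 * i + 1} + card {i. i < N \<and> x^2 dvd 4 * A * i + (A + 1)}
      \<le> 2 * (N div x^2 + 1)"
    using card_dvd_affine_le[of "x^2" 4 1 N] card_dvd_affine_le[of "x^2" "4 * A" "A + 1" N]
      \<open>coprime (x^2) 4\<close> by simp
  thus ?thesis
    by (meson card_Un_le le_trans)
qed

lemma card_not_squarefree_pair_le:
  fixes A N L :: nat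
  assumes A: "A mod 4 = 1" and L: "4 * A * N + 1 \<le> L^2"
  shows "real (card {i. i < N \<and> \<not> (squarefree (4 * i + 1) \<and> squarefree (A * (4 * i + 1) + 1))})
    \<le> real N / 2 + 2 * real L"
proof -
  define X where "X = {x. odd x \<and> 1 < x \<and> x \<le> L}"
  define bad where "bad x = {i. i < N \<and> x^2 dvd 4 * i + 1} \<union> {i. i < N \<and> x^2 dvd 4 * A * i + (A + 1)}" for x
  have "finite X"
    unfolding X_def by (rule finite_subset[of _ "{..L}"]) auto
  have "{i. i < N \<and> \<not> (squarefree (4 * i + 1) \<and> squarefree (A * (4 * i + 1) + 1))} \<subseteq> (\<Union>x\<in>X. bad x)"
    using not_squarefree_pair_odd_square_dvd[OF A L] unfolding X_def bad_def by blast
  hence "card {i. i < N \<and> \<not> (squarefree (4 * i + 1) \<and> squarefree (A * (4 * i + 1) + 1))}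
      \<le> card (\<Union>x\<in>X. bad x)"
    using \<open>finite X\<close> by (intro card_mono) (simp_all add: bad_def)
  also have "\<dots> \<le> (\<Sum>x\<in>X. card (bad x))"
    using \<open>finite X\<close> by (rule card_UN_le)
  also have "\<dots> \<le> (\<Sum>x\<in>X. 2 * (N div x^2 + 1))"
    unfolding bad_def X_def by (intro sum_mono card_odd_square_classes_le) simp
  finally have "real (card {i. i < N \<and> \<not> (squarefree (4 * i + 1) \<and> squarefree (A * (4 * i + 1) + 1))})
      \<le> real (\<Sum>x\<in>X. 2 * (N div x^2 + 1))"
    by (simp only: of_nat_le_iff)
  also have "\<dots> = 2 * (\<Sum>x\<in>X. real (N div x^2 + 1))"
    by (simp add: sum_distrib_left)
  also have "\<dots> \<le> real N / 2 + 2 * real L"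
    using sum_odd_square_quotients_le[of N L] unfolding X_def by simp
  finally show ?thesis .
qed

text \<open>Among the first \<open>K^2\<close> values of \<open>i\<close> at most \<open>K^2 / 2 + 2 L\<close> are excluded, with
  \<open>L = 2 A K + 1\<close>; the choice of \<open>K\<close> makes \<open>K^2 / 2 - 2 L\<close> exceed \<open>B + 1\<close>.\<close>
lemma card_squarefree_pairs_gt:
  fixes A B :: nat
  assumes A: "A mod 4 = 1"
  defines "K \<equiv> 8 * A + 2 * B + 8"
  shows "card {i. i < K^2 \<and> squarefree (4 * i + 1) \<and> squarefree (A * (4 * i + 1) + 1)} > B + 1"
    (is "card ?good > B + 1")
proof -
  define L where "L = 2 * A * K + 1"
  define bad where "bad = {i. i < K^2 \<and> \<not> (squarefree (4 * i + 1) \<and> squarefree (A * (4 * i + 1) + 1))}"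
  have "A \<le> A * A"
    using A by (cases A) auto
  hence "4 * A * K^2 + 1 \<le> 4 * (A * A) * K^2 + 1"
    by (simp add: mult_right_mono)
  also have "\<dots> \<le> L^2"
    unfolding L_def by (simp add: power2_eq_square algebra_simps)
  finally have "real (card bad) \<le> real (K^2) / 2 + 2 * real L"
    unfolding bad_def using card_not_squarefree_pair_le[OF A] by blast
  hence "2 * card bad \<le> K^2 + 4 * L"
    by linarith
  have "finite ?good" "finite bad" "?good \<inter> bad = {}" "?good \<union> bad = {..<K^2}"
    unfolding bad_def by auto
  hence "card ?good + card bad = K^2"
    using card_Un_disjoint[of ?good bad] by simp
  define a b where "a = A * K" and "b = B * K"
  have "K^2 = 8 * a + 2 * b + 8 * K"
    unfolding a_def b_def power2_eq_square by (subst (2) K_def) (simp add: algebra_simps)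
  moreover have "L = 2 * a + 1" "B \<le> b" "8 \<le> K"
    unfolding L_def K_def a_def b_def by simp_all
  ultimately show ?thesis
    using \<open>2 * card bad \<le> K^2 + 4 * L\<close> \<open>card ?good + card bad = K^2\<close> by linarith
qed

lemma squarefree_pairs_unbounded:
  fixes A B :: nat
  assumes "A mod 4 = 1"
  obtains d where "d > B" "squarefree d" "squarefree (A * d + 1)"
proof -
  define good where "good = {i. i < (8 * A + 2 * B + 8)^2 \<and> squarefree (4 * i + 1) \<and> squarefree (A * (4 * i + 1) + 1)}"
  have "\<exists>i \<in> good. 4 * i + 1 > B"
  proof (rule ccontr)
    assume "\<not> ?thesis"
    hence "good \<subseteq> {..B}"
      by force
    hence "card good \<le> B + 1"
      using card_mono[of "{..B}" good] by simp
    thus False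
      using card_squarefree_pairs_gt[OF assms, of B] unfolding good_def by simp
  qed
  thus ?thesis
    using that unfolding good_def by blast
qed

lemma squarefree_of_nat:
  fixes n :: nat
  assumes "squarefree n"
  shows "squarefree (int n)"
proof (rule squarefreeI)
  fix x :: int
  assume "x^2 dvd int n"
  hence "int (nat \<bar>x\<bar> ^ 2) dvd int n"
    by simp
  hence "nat \<bar>x\<bar> ^ 2 dvd n"
    by (simp only: of_nat_dvd_iff)
  hence "nat \<bar>x\<bar> = 1"
    using squarefreeD[OF assms] by simp
  thus "x dvd 1"
    by (simp add: abs_dvd_iff[symmetric] nat_eq_iff)
qed

lemma odd_power4_mod_4:
  fixes p :: nat
  assumes "odd p"
  shows "p ^ 4 mod 4 = 1"
proof -
  have "p mod 4 = 1 \<or> p mod 4 = 3"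
    using assms by presburger
  hence "(p mod 4) ^ 4 mod 4 = 1"
    by auto
  thus ?thesis
    by (simp add: power_mod)
qed

lemma squarefree_Richaud_Degert_radicand:
  fixes d p :: nat
  assumes "squarefree d" "squarefree (p ^ 4 * d + 1)"
  shows "squarefree (int d ^ 2 * (int p ^ 2) ^ 2 + int d)"
proof -
  have "squarefree (int (d * (p ^ 4 * d + 1)))"
    using assms coprime_mult_add_one[of d "p ^ 4"] by (intro squarefree_of_nat squarefree_mult_coprime)
  moreover have "int (d * (p ^ 4 * d + 1)) = int d ^ 2 * (int p ^ 2) ^ 2 + int d"
    by (simp add: power2_eq_square power4_eq_xxxx algebra_simps)
  ultimately show ?thesis
    by metis
qed

lemma fundamental_unit_pth_power_in_completions:
  fixes p d :: nat and M :: int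
  assumes p: "prime p" "odd p" and "d > 5"
    and M: "M = int d ^ 2 * (int p ^ 2) ^ 2 + int d" "squarefree M"
  shows "\<exists>e. is_fundamental_unit M e \<and> (\<forall>P \<in> primes_above M p. pth_power_in_completion M p P e)"
proof -
  define t where "t = of_int (2 * int d * int p ^ 2) + of_int 2 * sqrt (of_int M)"
  have unit_eq: "of_int (2 * int d * (int p ^ 2) ^ 2 + 1) + of_int (2 * int p ^ 2) * sqrt (of_int M)
      = 1 + real p ^ 2 * t"
    unfolding t_def by (simp add: distrib_left mult_ac power_mult_distrib flip: power_mult)
  have "is_fundamental_unit M
      (of_int (2 * int d * (int p ^ 2) ^ 2 + 1) + of_int (2 * int p ^ 2) * sqrt (of_int M))"
    by (rule fundamental_unit_Richaud_Degert[OF _ _ M])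
      (use \<open>d > 5\<close> odd_prime_ge_3[OF p] in \<open>simp_all add: one_le_power\<close>)
  hence "is_fundamental_unit M (1 + real p ^ 2 * t)"
    unfolding unit_eq .
  moreover have "t \<in> Z_sqrt M"
    unfolding t_def by (rule Z_sqrt_intro)
  hence "\<forall>P \<in> primes_above M p. pth_power_in_completion M p P (1 + real p ^ 2 * t)"
    using pth_power_in_completion_if_cong_1[OF p] unfolding primes_above_def by blast
  ultimately show ?thesis
    by blast
qed

theorem theorem6p3:
  fixes p :: nat
  assumes "prime p" and "odd p"
  shows "infinite {M :: int. M > 1 \<and> squarefree M \<and>
           (\<exists>e. is_fundamental_unit M e \<and>
                (\<forall>P \<in> primes_above M p. pth_power_in_completion M p P e))}"
  unfolding infinite_int_iff_unbounded
proof
  fix m :: int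
  obtain d where d: "d > nat \<bar>m\<bar> + 5" "squarefree d" "squarefree (p ^ 4 * d + 1)"
    using squarefree_pairs_unbounded[OF odd_power4_mod_4[OF assms(2)]] .
  define M where "M = int d ^ 2 * (int p ^ 2) ^ 2 + int d"
  have "squarefree M"
    unfolding M_def using d(2,3) by (rule squarefree_Richaud_Degert_radicand)
  moreover have "d > 5"
    using d(1) by simp
  hence "\<exists>e. is_fundamental_unit M e \<and> (\<forall>P \<in> primes_above M p. pth_power_in_completion M p P e)"
    using fundamental_unit_pth_power_in_completions[OF assms _ M_def \<open>squarefree M\<close>] by blast
  moreover have "M \<ge> int d"
    unfolding M_def by simp
  hence "M > 1" "\<bar>M\<bar> > m"
    using d(1) by linarith+
  ultimately show "\<exists>M. \<bar>M\<bar> > m \<and> M \<in> {M. M > 1 \<and> squarefree M \<and>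
      (\<exists>e. is_fundamental_unit M e \<and> (\<forall>P \<in> primes_above M p. pth_power_in_completion M p P e))}"
    by blast
qed

end
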